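(* Let $\tau:\mathcal{X}\to\mathcal{X}$ be a continuous map on a compact metric space $(\mathcal{X},d)$ and let $x_*\in\mathcal{X}$. Then $\tau$ is mixing with fixed point $x_*$ (i.e. $\lim_{n\to\infty}\tau^n(x)=x_*$ for all $x\in\mathcal{X}$) if and only if there exists a generalised Lyapunov function for $\tau$ around $x_*$.
   Context: $\tau^n$ is the $n$-fold composition of $\tau$. A continuous map $S:\mathcal{X}\to\mathbb{R}$ is a generalised Lyapunov function for $\tau$ around $x_*\in\mathcal{X}$ if for every $x\in\mathcal{X}$ the sequence $S(\tau^n(x))$ converges, and $\lim_{n\to\infty}S(\tau^n(x))\neq S(x)$ for all $x\neq x_*$. *)

theory Defs
  imports "HOL-Analysis.Analysis"
begin

definition gen_lyapunov ::
  "'a::metric_space set \<Rightarrow> ('a \<Rightarrow> 'a) \<Rightarrow> 'a \<Rightarrow> ('a \<Rightarrow> real) \<Rightarrow> bool" where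
  "gen_lyapunov X \<tau> xs S \<longleftrightarrow>
     continuous_on X S \<and>
     (\<forall>x\<in>X. convergent (\<lambda>n. S ((\<tau> ^^ n) x))) \<and>
     (\<forall>x\<in>X. x \<noteq> xs \<longrightarrow> lim (\<lambda>n. S ((\<tau> ^^ n) x)) \<noteq> S x)"

end

theory Submission
  imports Defs
begin

text \<open>If the orbits converge to \<open>x\<^sub>*\<close>, then \<open>S = dist \<cdot> x\<^sub>*\<close> is a generalised Lyapunov
  function: its values along every orbit tend to \<open>0 \<noteq> S x\<close>. Conversely, a continuous \<open>S\<close>
  whose values converge along every orbit is constant, equal to that limit, along the
  orbit of every \<open>\<omega>\<close>-limit point \<open>y\<close> of an orbit; hence \<open>lim S(\<tau>\<^sup>n y) = S y\<close>, which forces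
  \<open>y = x\<^sub>*\<close>. By compactness an orbit not converging to \<open>x\<^sub>*\<close> would have an \<open>\<omega>\<close>-limit point
  at positive distance from \<open>x\<^sub>*\<close>.\<close>

lemma funpow_in:
  assumes "\<tau> ` X \<subseteq> X" "x \<in> X"
  shows "(\<tau> ^^ n) x \<in> X"
  using assms by (induction n) auto

lemma continuous_on_funpow:
  assumes "\<tau> ` X \<subseteq> X" "continuous_on X \<tau>"
  shows "continuous_on X (\<tau> ^^ n)"
proof (induction n)
  case 0
  then show ?case by (simp add: continuous_on_id)
next
  case (Suc n)
  have "(\<tau> ^^ n) ` X \<subseteq> X"
    using funpow_in[OF assms(1)] by auto
  then have "continuous_on ((\<tau> ^^ n) ` X) \<tau>"
    using assms(2) continuous_on_subset by blast
  then show ?case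
    using continuous_on_compose[OF Suc] by simp
qed

lemma dist_gen_lyapunov:
  assumes "\<forall>x\<in>X. (\<lambda>n. (\<tau> ^^ n) x) \<longlonglongrightarrow> xs"
  shows "gen_lyapunov X \<tau> xs (\<lambda>y. dist y xs)"
proof -
  have lim0: "(\<lambda>n. dist ((\<tau> ^^ n) x) xs) \<longlonglongrightarrow> 0" if "x \<in> X" for x
    using assms that by (simp add: tendsto_dist_iff[symmetric])
  then have "lim (\<lambda>n. dist ((\<tau> ^^ n) x) xs) = 0" if "x \<in> X" for x
    using that limI by blast
  with lim0 show ?thesis
    unfolding gen_lyapunov_def convergent_def by (auto intro: continuous_intros)
qed

lemma omega_limit_away_from:
  fixes X :: "'a::metric_space set"
  assumes "compact X" "\<tau> ` X \<subseteq> X" "x \<in> X"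
    and "\<not> (\<lambda>n. (\<tau> ^^ n) x) \<longlonglongrightarrow> xs"
  obtains y q where "y \<in> X" "y \<noteq> xs" "strict_mono q" "(\<lambda>k. (\<tau> ^^ q k) x) \<longlonglongrightarrow> y"
proof -
  obtain e where e: "e > 0" "\<forall>N. \<exists>n\<ge>N. dist ((\<tau> ^^ n) x) xs \<ge> e"
    using assms(4) unfolding lim_sequentially not_all not_ex not_imp not_less by blast
  have "infinite {n. dist ((\<tau> ^^ n) x) xs \<ge> e}"
    unfolding infinite_nat_iff_unbounded_le using e(2) by blast
  then obtain r :: "nat \<Rightarrow> nat" where r: "strict_mono r" "\<forall>n. dist ((\<tau> ^^ r n) x) xs \<ge> e"
    using infinite_enumerate by blast
  obtain y r' where y: "y \<in> X" "strict_mono r'" "((\<lambda>n. (\<tau> ^^ r n) x) \<circ> r') \<longlonglongrightarrow> y"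
    using compact_imp_seq_compact[OF assms(1)] funpow_in[OF assms(2,3)]
    by (metis seq_compactE)
  have lim_y: "(\<lambda>k. (\<tau> ^^ (r \<circ> r') k) x) \<longlonglongrightarrow> y"
    using y(3) by (simp add: comp_def)
  have "dist y xs \<ge> e"
  proof (rule tendsto_lowerbound[OF _ _ trivial_limit_sequentially])
    show "((\<lambda>k. dist ((\<tau> ^^ (r \<circ> r') k) x) xs) \<longlongrightarrow> dist y xs) sequentially"
      using lim_y by (intro tendsto_intros)
    show "\<forall>\<^sub>F k in sequentially. e \<le> dist ((\<tau> ^^ (r \<circ> r') k) x) xs"
      using r(2) by simp
  qed
  with e(1) have "y \<noteq> xs" by auto
  then show thesis
    using that[OF y(1) _ strict_mono_o[OF r(1) y(2)]] lim_y by (simp add: comp_def)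
qed

lemma continuous_constant_on_omega_limit_orbit:
  fixes S :: "'a::topological_space \<Rightarrow> 'b::t2_space"
  assumes "\<tau> ` X \<subseteq> X" "continuous_on X \<tau>" "continuous_on X S" "x \<in> X" "y \<in> X"
    and lim_S: "(\<lambda>n. S ((\<tau> ^^ n) x)) \<longlonglongrightarrow> L"
    and "strict_mono q" and lim_y: "(\<lambda>k. (\<tau> ^^ q k) x) \<longlonglongrightarrow> y"
  shows "S ((\<tau> ^^ m) y) = L"
proof -
  have orbit_in: "(\<tau> ^^ n) x \<in> X" for n
    using funpow_in[OF assms(1,4)] .
  have shifted: "(\<lambda>k. (\<tau> ^^ m) ((\<tau> ^^ q k) x)) \<longlonglongrightarrow> (\<tau> ^^ m) y"
    using continuous_on_tendsto_compose[OF continuous_on_funpow[OF assms(1,2)] lim_y assms(5)]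
      orbit_in by (simp add: always_eventually)
  have lim_Sy: "(\<lambda>k. S ((\<tau> ^^ m) ((\<tau> ^^ q k) x))) \<longlonglongrightarrow> S ((\<tau> ^^ m) y)"
    using continuous_on_tendsto_compose[OF assms(3) shifted funpow_in[OF assms(1,5)]]
      funpow_in[OF assms(1) orbit_in] by (simp add: always_eventually)
  have "strict_mono (\<lambda>k. m + q k)"
    using \<open>strict_mono q\<close> by (simp add: strict_mono_def)
  from LIMSEQ_subseq_LIMSEQ[OF lim_S this]
  have "(\<lambda>k. S ((\<tau> ^^ (m + q k)) x)) \<longlonglongrightarrow> L"
    by (simp add: comp_def)
  then have "(\<lambda>k. S ((\<tau> ^^ m) ((\<tau> ^^ q k) x))) \<longlonglongrightarrow> L"
    by (simp only: funpow_add comp_apply)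
  with lim_Sy show ?thesis
    by (rule LIMSEQ_unique)
qed

theorem mainTheorem7:
  fixes X :: "'a::metric_space set" and \<tau> :: "'a \<Rightarrow> 'a" and xs :: 'a
  assumes "compact X"
    and "\<tau> ` X \<subseteq> X"
    and "continuous_on X \<tau>"
    and "xs \<in> X"
  shows "(\<forall>x\<in>X. (\<lambda>n. (\<tau> ^^ n) x) \<longlonglongrightarrow> xs) \<longleftrightarrow> (\<exists>S. gen_lyapunov X \<tau> xs S)"
proof
  assume "\<forall>x\<in>X. (\<lambda>n. (\<tau> ^^ n) x) \<longlonglongrightarrow> xs"
  then show "\<exists>S. gen_lyapunov X \<tau> xs S"
    using dist_gen_lyapunov by blast
next
  assume "\<exists>S. gen_lyapunov X \<tau> xs S"
  then obtain S where "gen_lyapunov X \<tau> xs S" ..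
  then have cont_S: "continuous_on X S"
    and conv: "\<And>x. x \<in> X \<Longrightarrow> convergent (\<lambda>n. S ((\<tau> ^^ n) x))"
    and moves: "\<And>x. x \<in> X \<Longrightarrow> x \<noteq> xs \<Longrightarrow> lim (\<lambda>n. S ((\<tau> ^^ n) x)) \<noteq> S x"
    unfolding gen_lyapunov_def by auto
  show "\<forall>x\<in>X. (\<lambda>n. (\<tau> ^^ n) x) \<longlonglongrightarrow> xs"
  proof (intro ballI, rule ccontr)
    fix x assume x: "x \<in> X" "\<not> (\<lambda>n. (\<tau> ^^ n) x) \<longlonglongrightarrow> xs"
    obtain y q where y: "y \<in> X" "y \<noteq> xs" "strict_mono q" "(\<lambda>k. (\<tau> ^^ q k) x) \<longlonglongrightarrow> y"
      using omega_limit_away_from[OF assms(1,2) x] .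
    have "(\<lambda>n. S ((\<tau> ^^ n) x)) \<longlonglongrightarrow> lim (\<lambda>n. S ((\<tau> ^^ n) x))"
      using conv[OF x(1)] by (simp add: convergent_LIMSEQ_iff)
    then have const: "S ((\<tau> ^^ n) y) = lim (\<lambda>n. S ((\<tau> ^^ n) x))" for n
      by (rule continuous_constant_on_omega_limit_orbit[OF assms(2,3) cont_S x(1) y(1) _ y(3,4)])
    then have "lim (\<lambda>n. S ((\<tau> ^^ n) y)) = S y"
      using const[of 0] by (simp add: limI)
    with moves[OF y(1,2)] show False ..
  qed
qed

end
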